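(* Let $\lambda$ be a generalized EW-labeling of a finite graded poset $P$ with $\hat0$. Then for every $k$ there is a label-preserving bijection from the set of saturated chains of length $k$ in $Q_\lambda(P)$ starting at its minimum $[\hat0]$ (labeled by $\lambda^*$) to the set of saturated chains of length $k$ in $P$ starting at $\hat0$ (labeled by $\lambda$). In particular there is a label-preserving bijection $\mathcal M_{Q_\lambda(P)}\to\mathcal M_P$ between maximal chains.
   Context: An E-labeling is a map $\lambda$ from the cover relations of $P$ to a poset $\Lambda$; words of labels of saturated chains are read bottom to top; a chain is increasing if its word is strictly increasing and ascent-free if no two consecutive labels $a,b$ satisfy $a<b$. ER-labeling: every closed interval has exactly one increasing maximal chain. Rank two switching property: for every saturated chain $\hat0=x_0\lessdot\cdots\lessdot x_k$ and $i$ with $\lambda(x_{i-1}\lessdot x_i)<\lambda(x_i\lessdot x_{i+1})$ there is a unique $x_i'$ with $x_{i-1}\lessdot x_i'\lessdot x_{i+1}$ whose two labels are those of $x_{i-1}\lessdot x_i\lessdot x_{i+1}$ swapped. Quadratic exchange $U_i$ replaces $x_i$ by $x_i'$ at an ascent at position $i$ (identity otherwise); $\mathbf c_1\sim_\lambda\mathbf c_2$ for maximal chains of an interval means they are connected by such exchanges (forwards or backwards). A generalized EW-labeling is an ER-labeling with the rank two switching property satisfying the braid relation ($U_iU_{i+1}U_i(\mathbf c)=U_{i+1}U_iU_{i+1}(\mathbf c)$ whenever $\mathbf c$ has strictly increasing labels at positions $i,i+1,i+2$) and the cancellative property (for $z<x<y$, $\mathbf c$ a maximal chain of $[z,x]$,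 $\mathbf c_1,\mathbf c_2$ maximal chains of $[x,y]$: $\mathbf c\cup\mathbf c_1\sim_\lambda\mathbf c\cup\mathbf c_2$ implies $\mathbf c_1\sim_\lambda\mathbf c_2$). $Q_\lambda(P)$: $C(P)$ is the set of saturated chains starting at $\hat0$, ordered by inclusion; $e(\mathbf c)$ its top element; $\mathbf c_1\sim\mathbf c_2$ iff $e(\mathbf c_1)=e(\mathbf c_2)=y$ and $\mathbf c_1\sim_\lambda\mathbf c_2$ in $[\hat0,y]$. $Q_\lambda(P)$ is the set of classes, ordered by the transitive closure of: $X\le Y$ if some $\mathbf c\in X$, $\mathbf d\in Y$ have $\mathbf c\subseteq\mathbf d$. Chains in a class $X$ share a multiset of labels $S(X)$, and $\lambda^*(X\lessdot Y)=S(Y)\setminus S(X)$ (a single label). *)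

theory Defs
  imports Main "HOL-Library.Multiset"
begin

definition pstrict :: "('a \<Rightarrow> 'a \<Rightarrow> bool) \<Rightarrow> 'a \<Rightarrow> 'a \<Rightarrow> bool" where
  "pstrict le x y \<longleftrightarrow> le x y \<and> x \<noteq> y"

definition is_poset :: "'a set \<Rightarrow> ('a \<Rightarrow> 'a \<Rightarrow> bool) \<Rightarrow> bool" where
  "is_poset A le \<longleftrightarrow> (\<forall>x\<in>A. le x x) \<and>
     (\<forall>x\<in>A. \<forall>y\<in>A. le x y \<and> le y x \<longrightarrow> x = y) \<and>
     (\<forall>x\<in>A. \<forall>y\<in>A. \<forall>w\<in>A. le x y \<and> le y w \<longrightarrow> le x w)"

definition is_bottom :: "'a set \<Rightarrow> ('a \<Rightarrow> 'a \<Rightarrow> bool) \<Rightarrow> 'a \<Rightarrow> bool" where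
  "is_bottom A le z \<longleftrightarrow> z \<in> A \<and> (\<forall>x\<in>A. le z x)"

definition covers :: "'a set \<Rightarrow> ('a \<Rightarrow> 'a \<Rightarrow> bool) \<Rightarrow> 'a \<Rightarrow> 'a \<Rightarrow> bool" where
  "covers A le x y \<longleftrightarrow> x \<in> A \<and> y \<in> A \<and> pstrict le x y \<and>
     \<not> (\<exists>w\<in>A. pstrict le x w \<and> pstrict le w y)"

text \<open>Saturated chain x_0 covered-by x_1 ... x_k, as a nonempty list; its length is k.\<close>
definition sat_chain :: "'a set \<Rightarrow> ('a \<Rightarrow> 'a \<Rightarrow> bool) \<Rightarrow> 'a list \<Rightarrow> bool" where
  "sat_chain A le xs \<longleftrightarrow> xs \<noteq> [] \<and> set xs \<subseteq> A \<and>
     (\<forall>i. Suc i < length xs \<longrightarrow> covers A le (xs ! i) (xs ! Suc i))"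

definition sat_chains_from :: "'a set \<Rightarrow> ('a \<Rightarrow> 'a \<Rightarrow> bool) \<Rightarrow> 'a \<Rightarrow> nat \<Rightarrow> 'a list set" where
  "sat_chains_from A le z k = {xs. sat_chain A le xs \<and> hd xs = z \<and> length xs = Suc k}"

definition is_chain :: "'a set \<Rightarrow> ('a \<Rightarrow> 'a \<Rightarrow> bool) \<Rightarrow> 'a set \<Rightarrow> bool" where
  "is_chain A le C \<longleftrightarrow> C \<subseteq> A \<and> (\<forall>x\<in>C. \<forall>y\<in>C. le x y \<or> le y x)"

definition maximal_chain :: "'a set \<Rightarrow> ('a \<Rightarrow> 'a \<Rightarrow> bool) \<Rightarrow> 'a list \<Rightarrow> bool" where
  "maximal_chain A le xs \<longleftrightarrow> sorted_wrt (pstrict le) xs \<and> is_chain A le (set xs) \<and>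
     (\<forall>C. is_chain A le C \<and> set xs \<subseteq> C \<longrightarrow> C = set xs)"

definition graded :: "'a set \<Rightarrow> ('a \<Rightarrow> 'a \<Rightarrow> bool) \<Rightarrow> bool" where
  "graded A le \<longleftrightarrow> (\<forall>xs ys. maximal_chain A le xs \<and> maximal_chain A le ys \<longrightarrow> length xs = length ys)"

definition interval :: "'a set \<Rightarrow> ('a \<Rightarrow> 'a \<Rightarrow> bool) \<Rightarrow> 'a \<Rightarrow> 'a \<Rightarrow> 'a set" where
  "interval A le x y = {w \<in> A. le x w \<and> le w y}"

definition mchains :: "'a set \<Rightarrow> ('a \<Rightarrow> 'a \<Rightarrow> bool) \<Rightarrow> 'a \<Rightarrow> 'a \<Rightarrow> 'a list set" where
  "mchains A le x y = {xs. maximal_chain (interval A le x y) le xs}"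

definition word :: "('a \<Rightarrow> 'a \<Rightarrow> 'l) \<Rightarrow> 'a list \<Rightarrow> 'l list" where
  "word lam xs = map (\<lambda>i. lam (xs ! i) (xs ! Suc i)) [0..<length xs - 1]"

definition increasing :: "'l::order list \<Rightarrow> bool" where
  "increasing w \<longleftrightarrow> (\<forall>i. Suc i < length w \<longrightarrow> w ! i < w ! Suc i)"

definition is_ER :: "'a set \<Rightarrow> ('a \<Rightarrow> 'a \<Rightarrow> bool) \<Rightarrow> ('a \<Rightarrow> 'a \<Rightarrow> 'l::order) \<Rightarrow> bool" where
  "is_ER A le lam \<longleftrightarrow> (\<forall>x\<in>A. \<forall>y\<in>A. le x y \<longrightarrow>
     (\<exists>!xs. xs \<in> mchains A le x y \<and> increasing (word lam xs)))"

definition rank_two_switching ::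
  "'a set \<Rightarrow> ('a \<Rightarrow> 'a \<Rightarrow> bool) \<Rightarrow> 'a \<Rightarrow> ('a \<Rightarrow> 'a \<Rightarrow> 'l::order) \<Rightarrow> bool" where
  "rank_two_switching A le z lam \<longleftrightarrow> (\<forall>xs i. sat_chain A le xs \<and> hd xs = z \<and> 0 < i \<and> Suc i < length xs
       \<and> lam (xs ! (i - 1)) (xs ! i) < lam (xs ! i) (xs ! Suc i) \<longrightarrow>
     (\<exists>!x'. covers A le (xs ! (i - 1)) x' \<and> covers A le x' (xs ! Suc i) \<and>
            lam (xs ! (i - 1)) x' = lam (xs ! i) (xs ! Suc i) \<and>
            lam x' (xs ! Suc i) = lam (xs ! (i - 1)) (xs ! i)))"

definition switch_elem ::
  "'a set \<Rightarrow> ('a \<Rightarrow> 'a \<Rightarrow> bool) \<Rightarrow> ('a \<Rightarrow> 'a \<Rightarrow> 'l) \<Rightarrow> 'a \<Rightarrow> 'a \<Rightarrow> 'a \<Rightarrow> 'a" where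
  "switch_elem A le lam a b c = (THE x'. covers A le a x' \<and> covers A le x' c \<and>
       lam a x' = lam b c \<and> lam x' c = lam a b)"

text \<open>Quadratic exchange U_i (element index i, 0-based list positions, x_0 = head).\<close>
definition qexch ::
  "'a set \<Rightarrow> ('a \<Rightarrow> 'a \<Rightarrow> bool) \<Rightarrow> ('a \<Rightarrow> 'a \<Rightarrow> 'l::order) \<Rightarrow> nat \<Rightarrow> 'a list \<Rightarrow> 'a list" where
  "qexch A le lam i xs = (if 0 < i \<and> Suc i < length xs \<and> lam (xs ! (i - 1)) (xs ! i) < lam (xs ! i) (xs ! Suc i)
      then xs[i := switch_elem A le lam (xs ! (i - 1)) (xs ! i) (xs ! Suc i)] else xs)"

definition braid_rel :: "'a set \<Rightarrow> ('a \<Rightarrow> 'a \<Rightarrow> bool) \<Rightarrow> ('a \<Rightarrow> 'a \<Rightarrow> 'l::order) \<Rightarrow> bool" where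
  "braid_rel A le lam \<longleftrightarrow> (\<forall>xs i. sat_chain A le xs \<and> 0 < i \<and> i + 2 < length xs \<and>
       lam (xs ! (i - 1)) (xs ! i) < lam (xs ! i) (xs ! (i + 1)) \<and>
       lam (xs ! i) (xs ! (i + 1)) < lam (xs ! (i + 1)) (xs ! (i + 2)) \<longrightarrow>
     qexch A le lam i (qexch A le lam (i + 1) (qexch A le lam i xs)) =
     qexch A le lam (i + 1) (qexch A le lam i (qexch A le lam (i + 1) xs)))"

definition exch_rel ::
  "'a set \<Rightarrow> ('a \<Rightarrow> 'a \<Rightarrow> bool) \<Rightarrow> ('a \<Rightarrow> 'a \<Rightarrow> 'l::order) \<Rightarrow> 'a \<Rightarrow> 'a \<Rightarrow> ('a list \<times> 'a list) set" where
  "exch_rel A le lam x y = {(c, qexch A le lam i c) | c i. c \<in> mchains A le x y}"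

definition lsim ::
  "'a set \<Rightarrow> ('a \<Rightarrow> 'a \<Rightarrow> bool) \<Rightarrow> ('a \<Rightarrow> 'a \<Rightarrow> 'l::order) \<Rightarrow> 'a \<Rightarrow> 'a \<Rightarrow> 'a list \<Rightarrow> 'a list \<Rightarrow> bool" where
  "lsim A le lam x y c d \<longleftrightarrow> c \<in> mchains A le x y \<and> d \<in> mchains A le x y \<and>
     (c, d) \<in> (exch_rel A le lam x y \<union> (exch_rel A le lam x y)\<inverse>)\<^sup>*"

definition cancellative :: "'a set \<Rightarrow> ('a \<Rightarrow> 'a \<Rightarrow> bool) \<Rightarrow> ('a \<Rightarrow> 'a \<Rightarrow> 'l::order) \<Rightarrow> bool" where
  "cancellative A le lam \<longleftrightarrow> (\<forall>z x y c c1 c2. z \<in> A \<and> x \<in> A \<and> y \<in> A \<and>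
       pstrict le z x \<and> pstrict le x y \<and>
       c \<in> mchains A le z x \<and> c1 \<in> mchains A le x y \<and> c2 \<in> mchains A le x y \<and>
       lsim A le lam z y (c @ tl c1) (c @ tl c2) \<longrightarrow> lsim A le lam x y c1 c2)"

definition gen_EW :: "'a set \<Rightarrow> ('a \<Rightarrow> 'a \<Rightarrow> bool) \<Rightarrow> 'a \<Rightarrow> ('a \<Rightarrow> 'a \<Rightarrow> 'l::order) \<Rightarrow> bool" where
  "gen_EW A le z lam \<longleftrightarrow> is_ER A le lam \<and> rank_two_switching A le z lam \<and>
     braid_rel A le lam \<and> cancellative A le lam"

definition Cset :: "'a set \<Rightarrow> ('a \<Rightarrow> 'a \<Rightarrow> bool) \<Rightarrow> 'a \<Rightarrow> 'a list set" where
  "Cset A le z = {xs. sat_chain A le xs \<and> hd xs = z}"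

definition chain_equiv ::
  "'a set \<Rightarrow> ('a \<Rightarrow> 'a \<Rightarrow> bool) \<Rightarrow> 'a \<Rightarrow> ('a \<Rightarrow> 'a \<Rightarrow> 'l::order) \<Rightarrow> 'a list \<Rightarrow> 'a list \<Rightarrow> bool" where
  "chain_equiv A le z lam c d \<longleftrightarrow> c \<in> Cset A le z \<and> d \<in> Cset A le z \<and> last c = last d \<and>
     lsim A le lam z (last c) c d"

definition Q_carrier ::
  "'a set \<Rightarrow> ('a \<Rightarrow> 'a \<Rightarrow> bool) \<Rightarrow> 'a \<Rightarrow> ('a \<Rightarrow> 'a \<Rightarrow> 'l::order) \<Rightarrow> 'a list set set" where
  "Q_carrier A le z lam = {{d. chain_equiv A le z lam c d} | c. c \<in> Cset A le z}"

definition Q_base ::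
  "'a set \<Rightarrow> ('a \<Rightarrow> 'a \<Rightarrow> bool) \<Rightarrow> 'a \<Rightarrow> ('a \<Rightarrow> 'a \<Rightarrow> 'l::order) \<Rightarrow> ('a list set \<times> 'a list set) set" where
  "Q_base A le z lam = {(X, Y). X \<in> Q_carrier A le z lam \<and> Y \<in> Q_carrier A le z lam \<and>
     (\<exists>c\<in>X. \<exists>d\<in>Y. set c \<subseteq> set d)}"

definition Q_le ::
  "'a set \<Rightarrow> ('a \<Rightarrow> 'a \<Rightarrow> bool) \<Rightarrow> 'a \<Rightarrow> ('a \<Rightarrow> 'a \<Rightarrow> 'l::order) \<Rightarrow> 'a list set \<Rightarrow> 'a list set \<Rightarrow> bool" where
  "Q_le A le z lam X Y \<longleftrightarrow> (X, Y) \<in> (Q_base A le z lam)\<^sup>+"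

definition Q_bottom ::
  "'a set \<Rightarrow> ('a \<Rightarrow> 'a \<Rightarrow> bool) \<Rightarrow> 'a \<Rightarrow> ('a \<Rightarrow> 'a \<Rightarrow> 'l::order) \<Rightarrow> 'a list set" where
  "Q_bottom A le z lam = {d. chain_equiv A le z lam [z] d}"

text \<open>S(X): common multiset of labels of the chains in the class X.\<close>
definition label_mset :: "('a \<Rightarrow> 'a \<Rightarrow> 'l) \<Rightarrow> 'a list set \<Rightarrow> 'l multiset" where
  "label_mset lam X = mset (word lam (SOME c. c \<in> X))"

definition Q_label :: "('a \<Rightarrow> 'a \<Rightarrow> 'l) \<Rightarrow> 'a list set \<Rightarrow> 'a list set \<Rightarrow> 'l" where
  "Q_label lam X Y = (THE l. label_mset lam Y - label_mset lam X = {#l#})"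

end

theory Submission
  imports Defs
begin

text \<open>
  A quadratic exchange preserves the endpoints, the length and the
  multiset of labels of a chain, and appending the same elements to two equivalent chains keeps
  them equivalent. Consequently \<open>X \<le> Y\<close> holds in \<open>Q\<^sub>\<lambda>(P)\<close> exactly when some chain of \<open>Y\<close>
  extends some chain of \<open>X\<close>, and the covers of \<open>Q\<^sub>\<lambda>(P)\<close> are the one-step extensions.
  Sending a saturated chain \<open>x\<^sub>0, \<dots>, x\<^sub>k\<close> of \<open>P\<close> to the classes of its prefixes is then a
  bijection onto the saturated chains of \<open>Q\<^sub>\<lambda>(P)\<close> starting at the bottom class, inverted by
  reading off top elements, and the cover from the class of \<open>x\<^sub>0 \<dots> x\<^sub>j\<close> to that of
  \<open>x\<^sub>0 \<dots> x\<^sub>j x\<^sub>j\<^sub>+\<^sub>1\<close> is labelled \<open>\<lambda>(x\<^sub>j, x\<^sub>j\<^sub>+\<^sub>1)\<close>. As \<open>P\<close> is finite, a top element is maximal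
  iff it has no cover, so maximal chains correspond as well.
\<close>

lemma poset_refl: "is_poset B le \<Longrightarrow> x \<in> B \<Longrightarrow> le x x"
  unfolding is_poset_def by blast

lemma poset_antisym: "is_poset B le \<Longrightarrow> x \<in> B \<Longrightarrow> y \<in> B \<Longrightarrow> le x y \<Longrightarrow> le y x \<Longrightarrow> x = y"
  unfolding is_poset_def by blast

lemma poset_trans:
  "is_poset B le \<Longrightarrow> x \<in> B \<Longrightarrow> y \<in> B \<Longrightarrow> w \<in> B \<Longrightarrow> le x y \<Longrightarrow> le y w \<Longrightarrow> le x w"
  unfolding is_poset_def by blast

lemma poset_subset: "is_poset A le \<Longrightarrow> B \<subseteq> A \<Longrightarrow> is_poset B le"
  unfolding is_poset_def by blast

lemma poset_pstrict_trans:
  "is_poset B le \<Longrightarrow> x \<in> B \<Longrightarrow> y \<in> B \<Longrightarrow> w \<in> B \<Longrightarrow> pstrict le x y \<Longrightarrow> pstrict le y w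
    \<Longrightarrow> pstrict le x w"
  unfolding pstrict_def by (metis poset_antisym poset_trans)

lemma poset_le_pstrict_trans:
  "is_poset B le \<Longrightarrow> x \<in> B \<Longrightarrow> y \<in> B \<Longrightarrow> w \<in> B \<Longrightarrow> le x y \<Longrightarrow> pstrict le y w
    \<Longrightarrow> pstrict le x w"
  unfolding pstrict_def by (metis poset_antisym poset_trans)

lemma finite_poset_cover_exists:
  assumes "finite B" and P: "is_poset B le" and "x \<in> B" "w \<in> B" "pstrict le x w"
  shows "\<exists>v. covers B le x v"
proof -
  let ?U = "{v \<in> B. pstrict le x v}"
  have "asymp_on ?U (pstrict le)"
    by (intro asymp_onI) (auto simp: pstrict_def dest: poset_antisym[OF P])
  moreover have "transp_on ?U (pstrict le)"
    by (intro transp_onI) (auto intro: poset_pstrict_trans[OF P])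
  ultimately obtain v where "v \<in> ?U" and "\<forall>u \<in> ?U. u \<noteq> v \<longrightarrow> \<not> pstrict le u v"
    using Finite_Set.bex_min_element[of ?U "pstrict le"] assms by auto
  then have "covers B le x v"
    using \<open>x \<in> B\<close> by (auto simp: covers_def pstrict_def)
  then show ?thesis ..
qed

subsection \<open>Saturated and maximal chains\<close>

lemma sat_chain_nth: "sat_chain B le xs \<Longrightarrow> i < length xs \<Longrightarrow> xs ! i \<in> B"
  unfolding sat_chain_def by auto

lemma sat_chain_covers:
  "sat_chain B le xs \<Longrightarrow> Suc i < length xs \<Longrightarrow> covers B le (xs ! i) (xs ! Suc i)"
  unfolding sat_chain_def by auto

lemma sat_chain_less:
  assumes P: "is_poset B le" and S: "sat_chain B le xs" and "i < j" "j < length xs"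
  shows "pstrict le (xs ! i) (xs ! j)"
  using \<open>i < j\<close> \<open>j < length xs\<close>
proof (induction j)
  case 0 then show ?case by simp
next
  case (Suc j)
  have "pstrict le (xs ! j) (xs ! Suc j)"
    using sat_chain_covers[OF S Suc.prems(2)] by (simp add: covers_def)
  moreover have "i = j \<or> pstrict le (xs ! i) (xs ! j)"
    using Suc by (auto simp: less_Suc_eq)
  ultimately show ?case
    using poset_pstrict_trans[OF P] sat_chain_nth[OF S] Suc.prems
    by (metis Suc_lessD order.strict_trans)
qed

lemma sat_chain_le:
  assumes P: "is_poset B le" and S: "sat_chain B le xs" and "i \<le> j" "j < length xs"
  shows "le (xs ! i) (xs ! j)"
  using assms sat_chain_less[OF P S, of i j] poset_refl[OF P sat_chain_nth[OF S]]
  by (cases "i = j") (auto simp: pstrict_def)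

lemma sat_chain_sorted: "is_poset B le \<Longrightarrow> sat_chain B le xs \<Longrightarrow> sorted_wrt (pstrict le) xs"
  by (simp add: sorted_wrt_iff_nth_less sat_chain_less)

lemma sat_chain_take: "sat_chain B le xs \<Longrightarrow> 0 < n \<Longrightarrow> sat_chain B le (take n xs)"
  unfolding sat_chain_def by (auto dest: in_set_takeD)

lemma sat_chain_drop: "sat_chain B le xs \<Longrightarrow> k < length xs \<Longrightarrow> sat_chain B le (drop k xs)"
  unfolding sat_chain_def by (auto dest: in_set_dropD)

lemma sat_chain_snoc_iff:
  assumes "xs \<noteq> []"
  shows "sat_chain B le (xs @ [a]) \<longleftrightarrow> sat_chain B le xs \<and> covers B le (last xs) a"
proof
  assume S: "sat_chain B le (xs @ [a])"
  have "sat_chain B le (take (length xs) (xs @ [a]))"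
    using sat_chain_take[OF S, of "length xs"] assms by simp
  moreover have "covers B le ((xs @ [a]) ! (length xs - 1)) ((xs @ [a]) ! Suc (length xs - 1))"
    using sat_chain_covers[OF S, of "length xs - 1"] assms by simp
  ultimately show "sat_chain B le xs \<and> covers B le (last xs) a"
    using assms by (simp add: nth_append last_conv_nth)
next
  assume S: "sat_chain B le xs \<and> covers B le (last xs) a"
  show "sat_chain B le (xs @ [a])"
    unfolding sat_chain_def
  proof (intro conjI allI impI)
    show "set (xs @ [a]) \<subseteq> B" using S by (auto simp: sat_chain_def covers_def)
    fix i assume i: "Suc i < length (xs @ [a])"
    show "covers B le ((xs @ [a]) ! i) ((xs @ [a]) ! Suc i)"
    proof (cases "Suc i < length xs")
      case True then show ?thesis using S by (simp add: nth_append sat_chain_def)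
    next
      case False
      then have "i = length xs - 1" using i by simp
      then show ?thesis using S assms False by (simp add: nth_append last_conv_nth)
    qed
  qed simp
qed

definition is_maximal :: "'a set \<Rightarrow> ('a \<Rightarrow> 'a \<Rightarrow> bool) \<Rightarrow> 'a \<Rightarrow> bool" where
  "is_maximal B le x \<longleftrightarrow> (\<forall>w\<in>B. \<not> pstrict le x w)"

lemma sorted_pstrict_nth_le_iff:
  assumes P: "is_poset B le" and s: "sorted_wrt (pstrict le) xs" and sub: "set xs \<subseteq> B"
    and "i < length xs" "j < length xs"
  shows "le (xs ! i) (xs ! j) \<longleftrightarrow> i \<le> j"
proof -
  have nth: "xs ! k \<in> B" if "k < length xs" for k using sub that by auto
  show ?thesis
  proof
    assume "le (xs ! i) (xs ! j)"
    moreover have "pstrict le (xs ! j) (xs ! i)" if "j < i"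
      using s that assms by (simp add: sorted_wrt_iff_nth_less)
    ultimately show "i \<le> j"
      using poset_antisym[OF P] nth assms by (auto simp: pstrict_def not_le[symmetric])
  next
    assume "i \<le> j"
    then show "le (xs ! i) (xs ! j)"
      using s poset_refl[OF P] nth assms
      by (cases "i = j") (auto simp: sorted_wrt_iff_nth_less pstrict_def)
  qed
qed

lemma maximal_chain_mem:
  assumes M: "maximal_chain B le xs" and P: "is_poset B le" and "w \<in> B"
    and "\<forall>x\<in>set xs. le x w \<or> le w x"
  shows "w \<in> set xs"
proof -
  have "is_chain B le (set xs)" using M by (simp add: maximal_chain_def)
  then have "is_chain B le (insert w (set xs))"
    using assms(3,4) poset_refl[OF P \<open>w \<in> B\<close>] unfolding is_chain_def by auto
  then have "insert w (set xs) = set xs" using M unfolding maximal_chain_def by blast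
  then show ?thesis by blast
qed

context
  fixes B le xs
  assumes P: "is_poset B le" and M: "maximal_chain B le xs"
begin

private lemma sorted: "sorted_wrt (pstrict le) xs" and subset: "set xs \<subseteq> B"
  using M by (auto simp: maximal_chain_def is_chain_def)

private lemma nth_le_iff: "i < length xs \<Longrightarrow> j < length xs \<Longrightarrow> le (xs ! i) (xs ! j) \<longleftrightarrow> i \<le> j"
  using sorted_pstrict_nth_le_iff[OF P sorted subset] .

private lemma comparable_mem:
  assumes "w \<in> B" "\<And>k. k < length xs \<Longrightarrow> le (xs ! k) w \<or> le w (xs ! k)"
  obtains j where "j < length xs" "w = xs ! j"
proof -
  have "w \<in> set xs"
    using maximal_chain_mem[OF M P \<open>w \<in> B\<close>] assms(2) by (metis in_set_conv_nth)
  then show ?thesis using that by (metis in_set_conv_nth)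
qed

lemma maximal_chain_hd: "is_bottom B le b \<Longrightarrow> xs \<noteq> [] \<and> hd xs = b"
proof -
  assume b: "is_bottom B le b"
  then have "b \<in> B" "\<And>k. k < length xs \<Longrightarrow> le b (xs ! k)"
    using subset by (auto simp: is_bottom_def dest: nth_mem)
  then obtain j where j: "j < length xs" "b = xs ! j"
    using comparable_mem by blast
  moreover have "xs ! 0 \<in> B" using j subset by (metis gr_zeroI not_less0 nth_mem subsetD)
  ultimately have "le (xs ! j) (xs ! 0)" using b by (simp add: is_bottom_def)
  then have "j = 0" using j nth_le_iff[of j 0] by (cases xs) auto
  then show ?thesis using j by (auto simp: hd_conv_nth)
qed

lemma maximal_chain_last_maximal: "xs \<noteq> [] \<Longrightarrow> is_maximal B le (last xs)"
  unfolding is_maximal_def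
proof (intro ballI notI)
  fix w assume ne: "xs \<noteq> []" and w: "w \<in> B" "pstrict le (last xs) w"
  have last: "last xs = xs ! (length xs - 1)" "length xs - 1 < length xs"
    using ne by (simp_all add: last_conv_nth)
  have "le (xs ! k) w" if "k < length xs" for k
  proof -
    have "le (xs ! k) (last xs)" using nth_le_iff[of k] last that by simp
    then show ?thesis
      using poset_le_pstrict_trans[OF P _ _ w(1) _ w(2)] subset last that
      by (auto simp: pstrict_def dest: nth_mem)
  qed
  then obtain j where j: "j < length xs" "w = xs ! j" using comparable_mem w by blast
  then have "j = length xs - 1"
    using w last nth_le_iff[of "length xs - 1" j] by (auto simp: pstrict_def)
  then show False using j w last by (simp add: pstrict_def)
qed

lemma maximal_chain_covers:
  assumes i: "Suc i < length xs"
  shows "covers B le (xs ! i) (xs ! Suc i)"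
proof -
  have nth: "xs ! k \<in> B" if "k < length xs" for k using subset that by (auto dest: nth_mem)
  have no_between: "\<not> (pstrict le (xs ! i) w \<and> pstrict le w (xs ! Suc i))" if w: "w \<in> B" for w
  proof
    assume between: "pstrict le (xs ! i) w \<and> pstrict le w (xs ! Suc i)"
    have "le (xs ! k) w \<or> le w (xs ! k)" if k: "k < length xs" for k
    proof (cases "k \<le> i")
      case True
      then have "le (xs ! k) (xs ! i)" using nth_le_iff k i by simp
      then show ?thesis
        using between poset_trans[OF P nth[OF k] nth[of i] w] i by (simp add: pstrict_def)
    next
      case False
      then have "le (xs ! Suc i) (xs ! k)" using nth_le_iff k i by simp
      then show ?thesis
        using between poset_trans[OF P w nth[OF i] nth[OF k]] by (simp add: pstrict_def)
    qed
    then obtain j where j: "j < length xs" "w = xs ! j" using comparable_mem w by blast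
    then have "i \<le> j" "j \<le> Suc i"
      using between nth_le_iff[of i j] nth_le_iff[of j "Suc i"] i by (auto simp: pstrict_def)
    then show False using between j by (auto simp: pstrict_def le_Suc_eq)
  qed
  have "pstrict le (xs ! i) (xs ! Suc i)"
    using sorted i by (simp add: sorted_wrt_iff_nth_less)
  then show ?thesis using no_between nth i by (simp add: covers_def)
qed

end

lemma sat_chain_comparable_mem:
  assumes P: "is_poset B le" and b: "is_bottom B le (hd xs)" and S: "sat_chain B le xs"
    and top: "is_maximal B le (last xs)" and w: "w \<in> B"
    and cmp: "\<forall>x\<in>set xs. le x w \<or> le w x"
  shows "w \<in> set xs"
proof -
  have ne: "xs \<noteq> []" using S by (simp add: sat_chain_def)
  define I where "I = {i. i < length xs \<and> le (xs ! i) w}"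
  define m where "m = Max I"
  have "0 \<in> I" using ne b w by (auto simp: I_def is_bottom_def hd_conv_nth)
  moreover have "finite I" by (simp add: I_def)
  ultimately have m: "m \<in> I" and m_max: "\<And>i. i \<in> I \<Longrightarrow> i \<le> m"
    unfolding m_def by (auto intro: Max_in)
  show ?thesis
  proof (cases "Suc m < length xs")
    case False
    then have "m = length xs - 1" using m by (auto simp: I_def)
    then have "le (last xs) w" using m ne by (simp add: I_def last_conv_nth)
    then have "last xs = w" using top w by (auto simp: is_maximal_def pstrict_def)
    then show ?thesis using ne by auto
  next
    case True
    have "Suc m \<notin> I" using m_max by fastforce
    then have "\<not> le (xs ! Suc m) w" using True by (simp add: I_def)
    then have "le w (xs ! Suc m)" "w \<noteq> xs ! Suc m"
      using cmp True poset_refl[OF P w] by auto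
    moreover have "le (xs ! m) w" using m by (simp add: I_def)
    moreover note sat_chain_covers[OF S True]
    ultimately have "w = xs ! m" using w unfolding covers_def pstrict_def by blast
    then show ?thesis using m by (simp add: I_def)
  qed
qed

lemma maximal_chainI:
  assumes P: "is_poset B le" and b: "is_bottom B le (hd xs)" and S: "sat_chain B le xs"
    and top: "is_maximal B le (last xs)"
  shows "maximal_chain B le xs"
proof -
  have "le x y \<or> le y x" if "x \<in> set xs" "y \<in> set xs" for x y
    using that sat_chain_le[OF P S] by (metis in_set_conv_nth nat_le_linear)
  then have "is_chain B le (set xs)"
    using S by (auto simp: is_chain_def sat_chain_def)
  moreover have "C \<subseteq> set xs" if C: "is_chain B le C" "set xs \<subseteq> C" for C
  proof
    fix w assume "w \<in> C"
    then have "w \<in> B" "\<forall>x\<in>set xs. le x w \<or> le w x"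
      using C unfolding is_chain_def by blast+
    then show "w \<in> set xs" using sat_chain_comparable_mem[OF P b S top] by blast
  qed
  ultimately show ?thesis
    using sat_chain_sorted[OF P S] by (auto simp: maximal_chain_def)
qed

lemma maximal_chain_iff_sat_chain:
  assumes P: "is_poset B le" and b: "is_bottom B le z"
  shows "maximal_chain B le xs \<longleftrightarrow> sat_chain B le xs \<and> hd xs = z \<and> is_maximal B le (last xs)"
proof
  assume M: "maximal_chain B le xs"
  then have "xs \<noteq> [] \<and> hd xs = z" using maximal_chain_hd[OF P M b] by blast
  moreover have "set xs \<subseteq> B" using M by (simp add: maximal_chain_def is_chain_def)
  ultimately show "sat_chain B le xs \<and> hd xs = z \<and> is_maximal B le (last xs)"
    using maximal_chain_covers[OF P M] maximal_chain_last_maximal[OF P M]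
    by (simp add: sat_chain_def)
qed (use maximal_chainI[OF P] b in auto)

lemma sat_chain_prefix_of_subset:
  assumes P: "is_poset B le" and Sc: "sat_chain B le c" and Sd: "sat_chain B le d"
    and hd: "hd c = hd d" and sub: "set c \<subseteq> set d"
  shows "c = take (length c) d"
proof -
  have cne: "c \<noteq> []" and dne: "d \<noteq> []" using Sc Sd by (auto simp: sat_chain_def)
  have same: "i < length d \<and> c ! i = d ! i" if "i < length c" for i
    using that
  proof (induction i)
    case 0 then show ?case using hd cne dne by (simp add: hd_conv_nth)
  next
    case (Suc i)
    then have IH: "i < length d" "c ! i = d ! i" by auto
    obtain m where m: "m < length d" "d ! m = c ! Suc i"
      using sub Suc.prems by (metis in_set_conv_nth nth_mem subsetD)
    have cov: "covers B le (d ! i) (d ! m)"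
      using sat_chain_covers[OF Sc Suc.prems] IH m by simp
    have "i < m"
    proof (rule ccontr)
      assume "\<not> i < m"
      then have "le (d ! m) (d ! i)" using sat_chain_le[OF P Sd] IH by simp
      then show False
        using cov poset_antisym[OF P] by (auto simp: covers_def pstrict_def)
    qed
    moreover have "\<not> Suc i < m"
      using cov sat_chain_less[OF P Sd, of i "Suc i"] sat_chain_less[OF P Sd, of "Suc i" m]
        sat_chain_nth[OF Sd, of "Suc i"] m
      by (auto simp: covers_def)
    ultimately have "m = Suc i" by simp
    then show ?case using m by simp
  qed
  have "length c - 1 < length d" using same[of "length c - 1"] cne by simp
  then have "length c \<le> length d" by linarith
  then show ?thesis using same by (intro nth_equalityI) simp_all
qed

lemma interval_covers_iff:
  assumes P: "is_poset A le" and "z \<in> A" "y \<in> A"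
    and "x \<in> interval A le z y" "x' \<in> interval A le z y"
  shows "covers (interval A le z y) le x x' \<longleftrightarrow> covers A le x x'"
proof -
  have "w \<in> interval A le z y" if "w \<in> A" "pstrict le x w" "pstrict le w x'" for w
    using that assms poset_trans[OF P, of z x w] poset_trans[OF P, of w x' y]
    by (auto simp: interval_def pstrict_def)
  then show ?thesis using assms by (auto simp: covers_def interval_def)
qed

lemma mchains_from_bottom_iff:
  assumes P: "is_poset A le" and b: "is_bottom A le z" and y: "y \<in> A"
  shows "xs \<in> mchains A le z y \<longleftrightarrow> sat_chain A le xs \<and> hd xs = z \<and> last xs = y"
proof -
  let ?I = "interval A le z y"
  have PI: "is_poset ?I le" using poset_subset[OF P] by (auto simp: interval_def)
  have zA: "z \<in> A" and zl: "\<And>x. x \<in> A \<Longrightarrow> le z x" using b by (auto simp: is_bottom_def)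
  have bI: "is_bottom ?I le z" using zA zl y poset_refl[OF P zA]
    by (auto simp: is_bottom_def interval_def)
  have yI: "y \<in> ?I" using y zl poset_refl[OF P y] by (auto simp: interval_def)
  have sat_iff: "sat_chain ?I le xs \<longleftrightarrow> sat_chain A le xs" if "set xs \<subseteq> ?I"
    using that interval_covers_iff[OF P zA y] by (auto simp: sat_chain_def interval_def subset_iff)
  have max_iff: "is_maximal ?I le x \<longleftrightarrow> x = y" if "x \<in> ?I" for x
    using that yI poset_antisym[OF P] by (auto simp: is_maximal_def interval_def pstrict_def)
  have sub: "set xs \<subseteq> ?I" if "sat_chain A le xs" "hd xs = z" "last xs = y"
  proof
    fix x assume "x \<in> set xs"
    then obtain i where i: "i < length xs" "x = xs ! i" by (auto simp: in_set_conv_nth)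
    moreover have "xs \<noteq> []" using that(1) by (simp add: sat_chain_def)
    ultimately have "le x y" using sat_chain_le[OF P that(1), of i "length xs - 1"] that(3)
      by (simp add: last_conv_nth)
    then show "x \<in> ?I" using i zl sat_chain_nth[OF that(1) i(1)] by (auto simp: interval_def)
  qed
  show ?thesis
    unfolding mchains_def mem_Collect_eq maximal_chain_iff_sat_chain[OF PI bI]
  proof (intro iffI conjI; elim conjE)
    assume S: "sat_chain ?I le xs" and "is_maximal ?I le (last xs)"
    moreover have "set xs \<subseteq> ?I" "last xs \<in> ?I" using S by (auto simp: sat_chain_def)
    ultimately show "sat_chain A le xs" "last xs = y" using sat_iff max_iff by auto
  next
    assume "sat_chain A le xs" "hd xs = z" "last xs = y"
    then show "sat_chain ?I le xs" "is_maximal ?I le (last xs)"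
      using sub sat_iff max_iff yI by auto
  qed
qed

lemma length_word [simp]: "length (word lam xs) = length xs - 1"
  by (simp add: word_def)

lemma nth_word: "j < length xs - 1 \<Longrightarrow> word lam xs ! j = lam (xs ! j) (xs ! Suc j)"
  by (simp add: word_def)

lemma word_snoc: "xs \<noteq> [] \<Longrightarrow> word lam (xs @ [a]) = word lam xs @ [lam (last xs) a]"
proof (rule nth_equalityI)
  fix j assume "xs \<noteq> []" and j: "j < length (word lam (xs @ [a]))"
  then consider "j < length xs - 1" | "j = length xs - 1" by fastforce
  then show "word lam (xs @ [a]) ! j = (word lam xs @ [lam (last xs) a]) ! j"
    by cases (use j \<open>xs \<noteq> []\<close> in \<open>auto simp: nth_word nth_append last_conv_nth\<close>)
qed simp

lemma word_list_update:
  assumes "0 < i" "Suc i < length xs"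
  shows "word lam (xs[i := x']) =
    (word lam xs)[i - 1 := lam (xs ! (i - 1)) x', i := lam x' (xs ! Suc i)]"
proof (rule nth_equalityI)
  fix j assume "j < length (word lam (xs[i := x']))"
  then have j: "j < length xs - 1" by simp
  consider "j = i - 1" | "j = i" | "j \<noteq> i - 1" "j \<noteq> i" by blast
  then show "word lam (xs[i := x']) ! j =
      (word lam xs)[i - 1 := lam (xs ! (i - 1)) x', i := lam x' (xs ! Suc i)] ! j"
    by cases (use assms j in \<open>auto simp: nth_word\<close>)
qed simp

lemma sat_chain_list_update:
  assumes S: "sat_chain B le xs" and i: "0 < i" "Suc i < length xs"
    and "covers B le (xs ! (i - 1)) x'" "covers B le x' (xs ! Suc i)"
  shows "sat_chain B le (xs[i := x'])"
  unfolding sat_chain_def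
proof (intro conjI allI impI)
  show "xs[i := x'] \<noteq> []" using S by (simp add: sat_chain_def)
  show "set (xs[i := x']) \<subseteq> B"
    using S assms(5) set_update_subset_insert[of xs i x'] by (auto simp: sat_chain_def covers_def)
  fix j assume j: "Suc j < length (xs[i := x'])"
  consider "j = i - 1" | "j = i" | "j \<noteq> i - 1" "j \<noteq> i" by blast
  then show "covers B le (xs[i := x'] ! j) (xs[i := x'] ! Suc j)"
  proof cases
    case 3
    then have "Suc j \<noteq> i" using i by auto
    then show ?thesis using 3 j sat_chain_covers[OF S, of j] by simp
  qed (use assms in auto)
qed

subsection \<open>Quadratic exchanges\<close>

lemma lsim_refl: "c \<in> mchains A le x y \<Longrightarrow> lsim A le lam x y c c"
  by (simp add: lsim_def)

lemma lsim_sym: "lsim A le lam x y c d \<Longrightarrow> lsim A le lam x y d c"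
proof -
  let ?R = "exch_rel A le lam x y"
  assume L: "lsim A le lam x y c d"
  then have "(d, c) \<in> ((?R \<union> ?R\<inverse>)\<inverse>)\<^sup>*" by (simp add: lsim_def rtrancl_converseI)
  moreover have "(?R \<union> ?R\<inverse>)\<inverse> = ?R \<union> ?R\<inverse>" by auto
  ultimately show ?thesis using L by (simp add: lsim_def)
qed

lemma lsim_trans: "lsim A le lam x y c d \<Longrightarrow> lsim A le lam x y d e \<Longrightarrow> lsim A le lam x y c e"
  unfolding lsim_def by (meson rtrancl_trans)

lemma qexch_snoc:
  assumes "qexch A le lam i xs \<noteq> xs"
  shows "qexch A le lam i (xs @ [a]) = qexch A le lam i xs @ [a]"
proof -
  have ascent: "0 < i \<and> Suc i < length xs \<and> lam (xs ! (i - 1)) (xs ! i) < lam (xs ! i) (xs ! Suc i)"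
    using assms by (auto simp: qexch_def split: if_splits)
  then have "(xs @ [a]) ! (i - 1) = xs ! (i - 1)" "(xs @ [a]) ! i = xs ! i"
    "(xs @ [a]) ! Suc i = xs ! Suc i"
    by (auto simp: nth_append)
  then show ?thesis using ascent unfolding qexch_def by (simp add: list_update_append1)
qed

locale rank_two_switching_poset =
  fixes A :: "'a set" and le :: "'a \<Rightarrow> 'a \<Rightarrow> bool" and z :: 'a
    and lam :: "'a \<Rightarrow> 'a \<Rightarrow> 'l::order"
  assumes poset: "is_poset A le" and bottom: "is_bottom A le z"
    and switching: "rank_two_switching A le z lam"
begin

abbreviation CS :: "'a list set" where "CS \<equiv> Cset A le z"

lemma bottom_in: "z \<in> A"
  using bottom by (simp add: is_bottom_def)

lemma Cset_ne: "c \<in> CS \<Longrightarrow> c \<noteq> []"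
  by (simp add: Cset_def sat_chain_def)

lemma Cset_last_in: "c \<in> CS \<Longrightarrow> last c \<in> A"
  by (auto simp: Cset_def sat_chain_def)

lemma Cset_take: "c \<in> CS \<Longrightarrow> 0 < n \<Longrightarrow> take n c \<in> CS"
  unfolding Cset_def using sat_chain_take[of A le c n] by (cases c; cases n) auto

lemma Cset_snoc_iff:
  assumes "c \<in> CS" shows "c @ [a] \<in> CS \<longleftrightarrow> covers A le (last c) a"
proof -
  have "c \<noteq> []" using Cset_ne[OF assms] .
  then show ?thesis using assms sat_chain_snoc_iff[of c A le a] by (simp add: Cset_def)
qed

lemma mchains_iff_Cset: "y \<in> A \<Longrightarrow> c \<in> mchains A le z y \<longleftrightarrow> c \<in> CS \<and> last c = y"
  using mchains_from_bottom_iff[OF poset bottom] by (auto simp: Cset_def)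

lemma switch_elem_spec:
  assumes "c \<in> CS" "0 < i" "Suc i < length c"
    and "lam (c ! (i - 1)) (c ! i) < lam (c ! i) (c ! Suc i)"
  defines "x' \<equiv> switch_elem A le lam (c ! (i - 1)) (c ! i) (c ! Suc i)"
  shows "covers A le (c ! (i - 1)) x' \<and> covers A le x' (c ! Suc i) \<and>
    lam (c ! (i - 1)) x' = lam (c ! i) (c ! Suc i) \<and> lam x' (c ! Suc i) = lam (c ! (i - 1)) (c ! i)"
proof -
  have "\<exists>!x'. covers A le (c ! (i - 1)) x' \<and> covers A le x' (c ! Suc i) \<and>
      lam (c ! (i - 1)) x' = lam (c ! i) (c ! Suc i)
        \<and> lam x' (c ! Suc i) = lam (c ! (i - 1)) (c ! i)"
    using assms(1-4) by (intro switching[unfolded rank_two_switching_def, rule_format])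
      (simp add: Cset_def)
  from theI'[OF this] show ?thesis unfolding x'_def switch_elem_def .
qed

lemma qexch_preserves:
  assumes c: "c \<in> CS"
  shows "qexch A le lam i c \<in> CS \<and> last (qexch A le lam i c) = last c \<and>
    length (qexch A le lam i c) = length c
      \<and> mset (word lam (qexch A le lam i c)) = mset (word lam c)"
proof (cases "0 < i \<and> Suc i < length c \<and> lam (c ! (i - 1)) (c ! i) < lam (c ! i) (c ! Suc i)")
  case False
  then have "qexch A le lam i c = c" unfolding qexch_def by (rule if_not_P)
  then show ?thesis using c by simp
next
  case True
  then have i: "0 < i" "Suc i < length c" by simp_all
  define x' where "x' = switch_elem A le lam (c ! (i - 1)) (c ! i) (c ! Suc i)"
  have q: "qexch A le lam i c = c[i := x']" using True by (simp add: qexch_def x'_def)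
  have sp: "covers A le (c ! (i - 1)) x'" "covers A le x' (c ! Suc i)"
    "lam (c ! (i - 1)) x' = lam (c ! i) (c ! Suc i)"
      "lam x' (c ! Suc i) = lam (c ! (i - 1)) (c ! i)"
    using switch_elem_spec[OF c] True unfolding x'_def by auto
  have "hd (c[i := x']) = hd c" using i by (cases c; cases i) auto
  then have "c[i := x'] \<in> CS"
    using sat_chain_list_update[OF _ i sp(1,2)] c by (simp add: Cset_def)
  moreover have "last (c[i := x']) = last c"
    using i by (subst last_list_update) auto
  moreover have "mset (word lam (c[i := x'])) = mset (word lam c)"
  proof -
    have "word lam c ! i = lam (c ! i) (c ! Suc i)"
      "word lam c ! (i - 1) = lam (c ! (i - 1)) (c ! i)"
      using i nth_word[of i c lam] nth_word[of "i - 1" c lam] by simp_all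
    then have "word lam (c[i := x']) =
        (word lam c)[i - 1 := word lam c ! i, i := word lam c ! (i - 1)]"
      using i sp by (simp add: word_list_update)
    then show ?thesis using i mset_swap[of i "word lam c" "i - 1"] by simp
  qed
  ultimately show ?thesis using q by simp
qed

lemma lsim_preserves:
  assumes y: "y \<in> A" and L: "lsim A le lam z y c d"
  shows "length d = length c \<and> mset (word lam d) = mset (word lam c)"
proof -
  let ?R = "exch_rel A le lam z y"
  have "(c, d) \<in> (?R \<union> ?R\<inverse>)\<^sup>*" using L by (simp add: lsim_def)
  then show ?thesis
  proof (induction rule: rtrancl_induct)
    case (step e e')
    then obtain u i where "u \<in> mchains A le z y"
      and "{e, e'} = {u, qexch A le lam i u}"
      by (auto simp: exch_rel_def)
    moreover from this have "length (qexch A le lam i u) = length u"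
      "mset (word lam (qexch A le lam i u)) = mset (word lam u)"
      using qexch_preserves[of u i] mchains_iff_Cset[OF y] by auto
    ultimately show ?case using step.IH by (auto simp: doubleton_eq_iff)
  qed simp
qed

lemma exch_rel_snoc:
  assumes "(u, v) \<in> exch_rel A le lam z y" "y \<in> A" "covers A le y a"
  shows "(u @ [a], v @ [a]) \<in> (exch_rel A le lam z a)\<^sup>="
proof -
  obtain i where u: "u \<in> mchains A le z y" and v: "v = qexch A le lam i u"
    using assms(1) by (auto simp: exch_rel_def)
  have "u @ [a] \<in> mchains A le z a"
    using u assms(2,3) mchains_iff_Cset Cset_snoc_iff by (auto simp: covers_def)
  then have "(u @ [a], qexch A le lam i (u @ [a])) \<in> exch_rel A le lam z a"
    unfolding exch_rel_def by blast
  moreover have "v = u \<or> qexch A le lam i (u @ [a]) = v @ [a]"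
    using qexch_snoc v by metis
  ultimately show ?thesis by auto
qed

lemma lsim_snoc:
  assumes y: "y \<in> A" and L: "lsim A le lam z y c d" and a: "covers A le y a"
  shows "lsim A le lam z a (c @ [a]) (d @ [a])"
proof -
  let ?R = "exch_rel A le lam z y" and ?R' = "exch_rel A le lam z a"
  have snoc_step: "(u @ [a], v @ [a]) \<in> (?R' \<union> ?R'\<inverse>)\<^sup>*" if "(u, v) \<in> ?R \<union> ?R\<inverse>" for u v
    using that exch_rel_snoc[OF _ y a] by auto
  have "(c, d) \<in> (?R \<union> ?R\<inverse>)\<^sup>*" using L by (simp add: lsim_def)
  then have "(c @ [a], d @ [a]) \<in> (?R' \<union> ?R'\<inverse>)\<^sup>*"
  proof (induction rule: rtrancl_induct)
    case (step u v)
    then show ?case using snoc_step[OF step.hyps(2)] by (meson rtrancl_trans)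
  qed simp
  moreover have "c @ [a] \<in> mchains A le z a" "d @ [a] \<in> mchains A le z a"
    using L y a mchains_iff_Cset Cset_snoc_iff by (auto simp: lsim_def covers_def)
  ultimately show ?thesis by (simp add: lsim_def)
qed

lemma lsim_append:
  "sat_chain A le (y # s) \<Longrightarrow> lsim A le lam z y c d \<Longrightarrow> lsim A le lam z (last (y # s)) (c @ s) (d @ s)"
proof (induction s arbitrary: y c d)
  case (Cons a s)
  have "y \<in> A" "covers A le y a" "sat_chain A le (a # s)"
    using Cons.prems(1) sat_chain_covers[OF Cons.prems(1), of 0]
      sat_chain_drop[OF Cons.prems(1), of 1]
    by (auto simp: sat_chain_def)
  then have "lsim A le lam z a (c @ [a]) (d @ [a])" using lsim_snoc Cons.prems(2) by blast
  from Cons.IH[OF \<open>sat_chain A le (a # s)\<close> this] show ?case by simp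
qed simp

subsection \<open>The poset of exchange classes\<close>

definition chain_class :: "'a list \<Rightarrow> 'a list set" where
  "chain_class c = {d. chain_equiv A le z lam c d}"

abbreviation QC :: "'a list set set" where "QC \<equiv> Q_carrier A le z lam"
abbreviation QL :: "'a list set \<Rightarrow> 'a list set \<Rightarrow> bool" where "QL \<equiv> Q_le A le z lam"

lemma mem_chain_class_iff:
  "c \<in> CS \<Longrightarrow> d \<in> chain_class c \<longleftrightarrow> d \<in> CS \<and> last d = last c \<and> lsim A le lam z (last c) c d"
  by (auto simp: chain_class_def chain_equiv_def)

lemma self_mem_chain_class:
  assumes "c \<in> CS" shows "c \<in> chain_class c"
proof -
  have "c \<in> mchains A le z (last c)" using mchains_iff_Cset[OF Cset_last_in] assms by simp
  then show ?thesis using lsim_refl mem_chain_class_iff assms by simp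
qed

lemma mem_chain_class_invariants:
  "c \<in> CS \<Longrightarrow> d \<in> chain_class c \<Longrightarrow>
    d \<in> CS \<and> last d = last c \<and> length d = length c \<and> mset (word lam d) = mset (word lam c)"
  using lsim_preserves[OF Cset_last_in] mem_chain_class_iff by simp

lemma chain_class_eq_if_mem:
  assumes c: "c \<in> CS" and d: "d \<in> chain_class c"
  shows "chain_class d = chain_class c"
proof -
  have dC: "d \<in> CS" and last: "last d = last c" and cd: "lsim A le lam z (last c) c d"
    using mem_chain_class_iff[OF c] d by auto
  have "e \<in> chain_class d \<longleftrightarrow> e \<in> chain_class c" for e
    unfolding mem_chain_class_iff[OF c] mem_chain_class_iff[OF dC] last
    using lsim_trans[OF cd] lsim_trans[OF lsim_sym[OF cd]] by blast
  then show ?thesis by blast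
qed

lemma chain_class_eqD:
  assumes "c \<in> CS" "d \<in> CS" "chain_class c = chain_class d"
  shows "length c = length d" "last c = last d" "lsim A le lam z (last c) c d"
proof -
  have "d \<in> chain_class c" unfolding assms(3) using self_mem_chain_class[OF assms(2)] .
  from mem_chain_class_invariants[OF assms(1) this]
    mem_chain_class_iff[OF assms(1), THEN iffD1, OF this]
  show "length c = length d" "last c = last d" "lsim A le lam z (last c) c d" by simp_all
qed

lemma Q_carrier_iff: "X \<in> QC \<longleftrightarrow> (\<exists>c\<in>CS. X = chain_class c)"
  by (auto simp: Q_carrier_def chain_class_def)

lemma Q_carrier_memD:
  assumes "X \<in> QC" "c \<in> X" shows "c \<in> CS" "X = chain_class c"
proof -
  obtain d where "d \<in> CS" "X = chain_class d" using assms(1) Q_carrier_iff by blast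
  moreover note assms(2)
  ultimately show "c \<in> CS" "X = chain_class c"
    using mem_chain_class_invariants chain_class_eq_if_mem by blast+
qed

lemma Q_base_iff_extension:
  "(X, Y) \<in> Q_base A le z lam \<longleftrightarrow>
    (\<exists>c r. c \<in> CS \<and> c @ r \<in> CS \<and> X = chain_class c \<and> Y = chain_class (c @ r))"
proof
  assume "(X, Y) \<in> Q_base A le z lam"
  then obtain c d where X: "X \<in> QC" "c \<in> X" and Y: "Y \<in> QC" "d \<in> Y" and sub: "set c \<subseteq> set d"
    by (auto simp: Q_base_def)
  have c: "c \<in> CS" "X = chain_class c" and d: "d \<in> CS" "Y = chain_class d"
    using Q_carrier_memD X Y by auto
  then have "c = take (length c) d"
    using sat_chain_prefix_of_subset[OF poset _ _ _ sub] by (simp add: Cset_def)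
  then have "d = c @ drop (length c) d" by (metis append_take_drop_id)
  then show "\<exists>c r. c \<in> CS \<and> c @ r \<in> CS \<and> X = chain_class c \<and> Y = chain_class (c @ r)"
    using c d by (intro exI[of _ c] exI[of _ "drop (length c) d"]) simp
next
  assume "\<exists>c r. c \<in> CS \<and> c @ r \<in> CS \<and> X = chain_class c \<and> Y = chain_class (c @ r)"
  then obtain c r where cr: "c \<in> CS" "c @ r \<in> CS" "X = chain_class c"
    "Y = chain_class (c @ r)" by blast
  then have "X \<in> QC" "Y \<in> QC" "c \<in> X" "c @ r \<in> Y" "set c \<subseteq> set (c @ r)"
    using self_mem_chain_class Q_carrier_iff by auto
  then show "(X, Y) \<in> Q_base A le z lam" unfolding Q_base_def by blast
qed

lemma chain_class_append_cong:
  assumes c: "c \<in> CS" and d: "d \<in> CS" and cd: "chain_class c = chain_class d" and ds: "d @ s \<in> CS"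
  shows "c @ s \<in> CS \<and> chain_class (c @ s) = chain_class (d @ s)"
proof (cases "s = []")
  case False
  have dne: "d \<noteq> []" using Cset_ne[OF d] .
  have "length d - 1 < length (d @ s)" using dne by (cases d) auto
  then have "sat_chain A le (drop (length d - 1) (d @ s))"
    using ds by (intro sat_chain_drop) (auto simp: Cset_def)
  moreover have "drop (length d - 1) (d @ s) = last d # s"
    using dne by (cases d rule: rev_cases) auto
  ultimately have "sat_chain A le (last d # s)" by simp
  moreover have "lsim A le lam z (last d) d c"
    using chain_class_eqD[OF c d cd] lsim_sym by simp
  ultimately have "lsim A le lam z (last (last d # s)) (d @ s) (c @ s)"
    by (rule lsim_append)
  then have L: "lsim A le lam z (last (d @ s)) (d @ s) (c @ s)"
    using False by simp
  then have "c @ s \<in> CS" "last (c @ s) = last (d @ s)"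
    using mchains_iff_Cset[OF Cset_last_in[OF ds]] by (auto simp: lsim_def)
  then have "c @ s \<in> chain_class (d @ s)" using L mem_chain_class_iff[OF ds] by blast
  then show ?thesis using chain_class_eq_if_mem[OF ds] \<open>c @ s \<in> CS\<close> by blast
qed (use c cd in simp)

lemma Q_le_iff_extension:
  "QL X Y \<longleftrightarrow> (\<exists>c r. c \<in> CS \<and> c @ r \<in> CS \<and> X = chain_class c \<and> Y = chain_class (c @ r))"
proof
  assume "QL X Y"
  then show "\<exists>c r. c \<in> CS \<and> c @ r \<in> CS \<and> X = chain_class c \<and> Y = chain_class (c @ r)"
    unfolding Q_le_def
  proof (induction rule: trancl_induct)
    case (base Y) then show ?case by (rule Q_base_iff_extension[THEN iffD1])
  next
    case (step Y W)
    obtain c r where cr: "c \<in> CS" "c @ r \<in> CS" "X = chain_class c" "Y = chain_class (c @ r)"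
      using step.IH by blast
    obtain d s where ds: "d \<in> CS" "d @ s \<in> CS" "Y = chain_class d" "W = chain_class (d @ s)"
      using Q_base_iff_extension[THEN iffD1, OF step.hyps(2)] by blast
    have "chain_class (c @ r) = chain_class d" using cr(4) ds(3) by simp
    from chain_class_append_cong[OF cr(2) ds(1) this ds(2)]
    have "c @ r @ s \<in> CS" "chain_class (c @ r @ s) = W" using ds(4) by simp_all
    then show ?case using cr(1,3) by blast
  qed
next
  assume "\<exists>c r. c \<in> CS \<and> c @ r \<in> CS \<and> X = chain_class c \<and> Y = chain_class (c @ r)"
  then have "(X, Y) \<in> Q_base A le z lam" by (rule Q_base_iff_extension[THEN iffD2])
  then show "QL X Y" unfolding Q_le_def by (rule r_into_trancl)
qed

lemma Q_le_extension: "c \<in> CS \<Longrightarrow> c @ r \<in> CS \<Longrightarrow> QL (chain_class c) (chain_class (c @ r))"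
  by (rule Q_le_iff_extension[THEN iffD2]) blast

lemma Q_le_length:
  assumes c: "c \<in> CS" and d: "d \<in> CS" and L: "QL (chain_class c) (chain_class d)"
  shows "length c \<le> length d" "length c = length d \<Longrightarrow> chain_class c = chain_class d"
proof -
  obtain c' r where cr: "c' \<in> CS" "c' @ r \<in> CS" "chain_class c = chain_class c'"
    "chain_class d = chain_class (c' @ r)"
    using Q_le_iff_extension[THEN iffD1, OF L] by blast
  then have "length c = length c'" "length d = length c' + length r"
    using chain_class_eqD(1)[OF c cr(1)] chain_class_eqD(1)[OF d cr(2)] by simp_all
  then show "length c \<le> length d" "length c = length d \<Longrightarrow> chain_class c = chain_class d"
    using cr by auto
qed

lemma Q_poset: "is_poset QC QL"
  unfolding is_poset_def
proof (intro conjI ballI impI)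
  fix X assume "X \<in> QC"
  then obtain c where "c \<in> CS" "X = chain_class c" using Q_carrier_iff[THEN iffD1] by blast
  then show "QL X X" using Q_le_extension[of c "[]"] by simp
next
  fix X Y assume "X \<in> QC" "Y \<in> QC" and L: "QL X Y \<and> QL Y X"
  then obtain c d where c: "c \<in> CS" "X = chain_class c" and d: "d \<in> CS" "Y = chain_class d"
    using Q_carrier_iff[THEN iffD1] by meson
  then have "length c = length d"
    using L Q_le_length(1)[OF c(1) d(1)] Q_le_length(1)[OF d(1) c(1)] by simp
  then show "X = Y" using L c d Q_le_length(2)[OF c(1) d(1)] by simp
next
  fix X Y W assume "QL X Y \<and> QL Y W"
  then show "QL X W" unfolding Q_le_def by auto
qed

lemma Q_bottom_eq: "Q_bottom A le z lam = chain_class [z]"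
  by (simp add: Q_bottom_def chain_class_def)

lemma singleton_bottom_in_Cset: "[z] \<in> CS"
  using bottom_in by (simp add: Cset_def sat_chain_def)

lemma Q_is_bottom: "is_bottom QC QL (Q_bottom A le z lam)"
  unfolding is_bottom_def Q_bottom_eq
proof (intro conjI ballI)
  show "chain_class [z] \<in> QC" using Q_carrier_iff singleton_bottom_in_Cset by auto
  fix X assume "X \<in> QC"
  then obtain c where c: "c \<in> CS" "X = chain_class c" using Q_carrier_iff[THEN iffD1] by blast
  then have "c = [z] @ tl c" by (cases c) (auto simp: Cset_def sat_chain_def)
  then show "QL (chain_class [z]) X"
    using Q_le_extension[OF singleton_bottom_in_Cset, of "tl c"] c by simp
qed

subsection \<open>Chains of prefix classes\<close>

lemma Q_covers_snoc:
  assumes c: "c \<in> CS" and ca: "c @ [a] \<in> CS"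
  shows "covers QC QL (chain_class c) (chain_class (c @ [a]))"
proof -
  have in_QC: "chain_class c \<in> QC" "chain_class (c @ [a]) \<in> QC" using c ca Q_carrier_iff by auto
  have ne: "chain_class c \<noteq> chain_class (c @ [a])" using chain_class_eqD(1)[OF c ca] by auto
  have "\<not> (pstrict QL (chain_class c) W \<and> pstrict QL W (chain_class (c @ [a])))"
    if W_in: "W \<in> QC" for W
  proof
    assume W: "pstrict QL (chain_class c) W \<and> pstrict QL W (chain_class (c @ [a]))"
    obtain w where w: "w \<in> CS" "W = chain_class w" using Q_carrier_iff[THEN iffD1, OF W_in] by blast
    have "QL (chain_class c) (chain_class w)" "chain_class c \<noteq> chain_class w"
      "QL (chain_class w) (chain_class (c @ [a]))" "chain_class w \<noteq> chain_class (c @ [a])"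
      using W w by (simp_all add: pstrict_def)
    then have "length c < length w" "length w < length (c @ [a])"
      using Q_le_length[OF c w(1)] Q_le_length[OF w(1) ca] by (meson le_neq_implies_less)+
    then show False by simp
  qed
  then show ?thesis
    using in_QC ne Q_le_extension[OF c ca] by (auto simp: covers_def pstrict_def)
qed

lemma Q_covers_imp_snoc:
  assumes c: "c \<in> CS" and cov: "covers QC QL (chain_class c) Y"
  obtains a where "c @ [a] \<in> CS" "Y = chain_class (c @ [a])"
proof -
  have "QL (chain_class c) Y" "chain_class c \<noteq> Y"
    using cov by (simp_all add: covers_def pstrict_def)
  then obtain c' r where cr: "c' \<in> CS" "c' @ r \<in> CS" "chain_class c = chain_class c'"
    "Y = chain_class (c' @ r)"
    using Q_le_iff_extension[THEN iffD1] by blast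
  have "r \<noteq> []" using \<open>chain_class c \<noteq> Y\<close> cr(3,4) by (metis append_Nil2)
  then obtain a r' where r: "r = a # r'" by (cases r) auto
  have c'a: "c' @ [a] \<in> CS" using Cset_take[OF cr(2), of "Suc (length c')"] r by simp
  have "r' = []"
  proof (rule ccontr)
    assume "r' \<noteq> []"
    have "chain_class c \<noteq> chain_class (c' @ [a])"
      using chain_class_eqD(1)[OF cr(1) c'a] cr(3) by auto
    moreover have "chain_class (c' @ [a]) \<noteq> Y"
      using chain_class_eqD(1)[OF c'a cr(2)] cr(4) r \<open>r' \<noteq> []\<close> by auto
    moreover have "QL (chain_class c) (chain_class (c' @ [a]))" "QL (chain_class (c' @ [a])) Y"
      using Q_le_extension[OF cr(1) c'a] Q_le_extension[OF c'a, of r'] cr r by simp_all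
    moreover have "chain_class (c' @ [a]) \<in> QC" using c'a Q_carrier_iff by auto
    ultimately show False using cov unfolding covers_def pstrict_def by blast
  qed
  then show thesis
    using that[of a] chain_class_append_cong[OF c cr(1) cr(3) c'a] cr(4) r by simp
qed

definition prefix_classes :: "'a list \<Rightarrow> 'a list set list" where
  "prefix_classes xs = map (\<lambda>j. chain_class (take (Suc j) xs)) [0..<length xs]"

lemma length_prefix_classes [simp]: "length (prefix_classes xs) = length xs"
  by (simp add: prefix_classes_def)

lemma nth_prefix_classes: "j < length xs \<Longrightarrow> prefix_classes xs ! j = chain_class (take (Suc j) xs)"
  by (simp add: prefix_classes_def)

lemma prefix_classes_snoc:
  "prefix_classes (xs @ [a]) = prefix_classes xs @ [chain_class (xs @ [a])]"
  by (simp add: prefix_classes_def)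

lemma last_prefix_classes: "xs \<noteq> [] \<Longrightarrow> last (prefix_classes xs) = chain_class xs"
  by (simp add: prefix_classes_def last_map)

lemma prefix_classes_sat_chain:
  assumes xs: "xs \<in> CS"
  shows "sat_chain QC QL (prefix_classes xs)" "hd (prefix_classes xs) = Q_bottom A le z lam"
proof -
  have ne: "xs \<noteq> []" using Cset_ne[OF xs] .
  then have ne': "prefix_classes xs \<noteq> []" by (metis length_0_conv length_prefix_classes)
  have "prefix_classes xs ! j \<in> QC" if "j < length xs" for j
    using nth_prefix_classes[OF that] Cset_take[OF xs, of "Suc j"] Q_carrier_iff by auto
  moreover have "covers QC QL (prefix_classes xs ! j) (prefix_classes xs ! Suc j)"
    if j: "Suc j < length xs" for j
    using Q_covers_snoc[OF Cset_take[OF xs, of "Suc j"]] Cset_take[OF xs, of "Suc (Suc j)"] j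
    by (simp add: nth_prefix_classes take_Suc_conv_app_nth)
  ultimately show "sat_chain QC QL (prefix_classes xs)" using ne'
    unfolding sat_chain_def by (auto simp: in_set_conv_nth)
  have "take 1 xs = [z]" using xs ne by (cases xs) (auto simp: Cset_def)
  then show "hd (prefix_classes xs) = Q_bottom A le z lam"
    using ne ne' nth_prefix_classes[of 0 xs] by (simp add: hd_conv_nth Q_bottom_eq)
qed

lemma inj_on_prefix_classes: "inj_on prefix_classes CS"
proof (rule inj_onI)
  fix xs ys assume xs: "xs \<in> CS" and ys: "ys \<in> CS" and eq: "prefix_classes xs = prefix_classes ys"
  have len: "length xs = length ys" using arg_cong[OF eq, of length] by simp
  have "xs ! j = ys ! j" if j: "j < length xs" for j
  proof -
    have "chain_class (take (Suc j) xs) = chain_class (take (Suc j) ys)"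
      using arg_cong[OF eq, of "\<lambda>Xs. Xs ! j"] j len by (simp add: nth_prefix_classes)
    then have "last (take (Suc j) xs) = last (take (Suc j) ys)"
      using chain_class_eqD(2) Cset_take[OF xs] Cset_take[OF ys] by simp
    then show ?thesis using j len by (simp add: take_Suc_conv_app_nth)
  qed
  then show "xs = ys" using len by (simp add: nth_equalityI)
qed

lemma prefix_classes_surj:
  "sat_chain QC QL Xs \<Longrightarrow> hd Xs = Q_bottom A le z lam \<Longrightarrow> \<exists>xs\<in>CS. prefix_classes xs = Xs"
proof (induction Xs rule: rev_induct)
  case (snoc Y Ys)
  show ?case
  proof (cases "Ys = []")
    case True
    then have "Y = chain_class [z]" using snoc.prems by (simp add: Q_bottom_eq)
    then show ?thesis
      using True singleton_bottom_in_Cset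
      by (intro bexI[of _ "[z]"]) (auto simp: prefix_classes_def)
  next
    case False
    have "sat_chain QC QL Ys" "hd Ys = Q_bottom A le z lam"
      using sat_chain_snoc_iff[OF False] snoc.prems False by auto
    then obtain ys where ys: "ys \<in> CS" "prefix_classes ys = Ys" using snoc.IH by blast
    have "covers QC QL (chain_class ys) Y"
      using sat_chain_snoc_iff[OF False] snoc.prems(1) ys(2)
        last_prefix_classes[OF Cset_ne[OF ys(1)]]
      by simp
    then obtain a where "ys @ [a] \<in> CS" "Y = chain_class (ys @ [a])"
      by (rule Q_covers_imp_snoc[OF ys(1)])
    then show ?thesis using prefix_classes_snoc[of ys a] ys(2) by auto
  qed
qed (simp add: sat_chain_def)

lemma label_mset_chain_class: "c \<in> CS \<Longrightarrow> label_mset lam (chain_class c) = mset (word lam c)"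
  using someI[of "\<lambda>d. d \<in> chain_class c", OF self_mem_chain_class] mem_chain_class_invariants
  by (simp add: label_mset_def)

lemma Q_label_chain_class_snoc:
  assumes c: "c \<in> CS" and "c @ [a] \<in> CS"
  shows "Q_label lam (chain_class c) (chain_class (c @ [a])) = lam (last c) a"
proof -
  have "label_mset lam (chain_class (c @ [a])) - label_mset lam (chain_class c) =
      {#lam (last c) a#}"
    using assms label_mset_chain_class word_snoc[OF Cset_ne[OF c], of lam a] by simp
  then show ?thesis by (simp add: Q_label_def)
qed

lemma word_prefix_classes:
  assumes xs: "xs \<in> CS"
  shows "word (Q_label lam) (prefix_classes xs) = word lam xs"
proof (rule nth_equalityI)
  fix j assume "j < length (word (Q_label lam) (prefix_classes xs))"
  then have j: "Suc j < length xs" by simp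
  then have "take (Suc (Suc j)) xs = take (Suc j) xs @ [xs ! Suc j]"
    "last (take (Suc j) xs) = xs ! j"
    by (simp_all add: take_Suc_conv_app_nth)
  then show "word (Q_label lam) (prefix_classes xs) ! j = word lam xs ! j"
    using j Q_label_chain_class_snoc Cset_take[OF xs, of "Suc (Suc j)"] Cset_take[OF xs, of "Suc j"]
    by (simp add: nth_word nth_prefix_classes)
qed simp

lemma is_maximal_if_Q_maximal:
  assumes fin: "finite A" and xs: "xs \<in> CS" and Qmax: "is_maximal QC QL (chain_class xs)"
  shows "is_maximal A le (last xs)"
  unfolding is_maximal_def
proof (intro ballI notI)
  fix w assume "w \<in> A" "pstrict le (last xs) w"
  then obtain v where "covers A le (last xs) v"
    using finite_poset_cover_exists[OF fin poset Cset_last_in[OF xs]] by blast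
  then have xv: "xs @ [v] \<in> CS" using Cset_snoc_iff[OF xs] by simp
  then have "pstrict QL (chain_class xs) (chain_class (xs @ [v]))" "chain_class (xs @ [v]) \<in> QC"
    using Q_covers_snoc[OF xs xv] by (simp_all add: covers_def)
  then show False using Qmax by (auto simp: is_maximal_def)
qed

lemma Q_maximal_if_is_maximal:
  assumes xs: "xs \<in> CS" and Amax: "is_maximal A le (last xs)"
  shows "is_maximal QC QL (chain_class xs)"
  unfolding is_maximal_def
proof (intro ballI notI)
  fix W assume "W \<in> QC" "pstrict QL (chain_class xs) W"
  then have "QL (chain_class xs) W" "chain_class xs \<noteq> W" by (simp_all add: pstrict_def)
  then obtain c r where cr: "c \<in> CS" "c @ r \<in> CS" "chain_class xs = chain_class c"
    "W = chain_class (c @ r)"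
    using Q_le_iff_extension[THEN iffD1] by blast
  then obtain a r' where r: "r = a # r'" using \<open>chain_class xs \<noteq> W\<close> by (cases r) auto
  then have "c @ [a] \<in> CS" using Cset_take[OF cr(2), of "Suc (length c)"] by simp
  then have "covers A le (last xs) a"
    using Cset_snoc_iff[OF cr(1)] chain_class_eqD(2)[OF xs cr(1) cr(3)] by simp
  then show False using Amax unfolding is_maximal_def covers_def by blast
qed

lemma is_maximal_prefix_classes_iff:
  assumes "finite A" and xs: "xs \<in> CS"
  shows "is_maximal QC QL (last (prefix_classes xs)) \<longleftrightarrow> is_maximal A le (last xs)"
  using last_prefix_classes[OF Cset_ne[OF xs]] is_maximal_if_Q_maximal[OF assms]
    Q_maximal_if_is_maximal[OF xs] by auto

lemma sat_chains_from_eq: "sat_chains_from A le z k = {xs \<in> CS. length xs = Suc k}"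
  by (auto simp: sat_chains_from_def Cset_def)

lemma maximal_chains_eq: "{xs. maximal_chain A le xs} = {xs \<in> CS. is_maximal A le (last xs)}"
  using maximal_chain_iff_sat_chain[OF poset bottom] by (auto simp: Cset_def)

lemma prefix_classes_bij:
  "bij_betw prefix_classes CS {Xs. sat_chain QC QL Xs \<and> hd Xs = Q_bottom A le z lam}"
  unfolding bij_betw_def
  using inj_on_prefix_classes prefix_classes_sat_chain prefix_classes_surj by blast

lemma labelled_bij_from_prefix_classess:
  assumes "S \<subseteq> CS" and "T \<subseteq> {Xs. sat_chain QC QL Xs \<and> hd Xs = Q_bottom A le z lam}"
    and "\<And>xs. xs \<in> CS \<Longrightarrow> xs \<in> S \<longleftrightarrow> prefix_classes xs \<in> T"
  shows "\<exists>f. bij_betw f T S \<and> (\<forall>Xs\<in>T. word lam (f Xs) = word (Q_label lam) Xs)"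
proof -
  have image: "prefix_classes ` S = T"
  proof
    show "prefix_classes ` S \<subseteq> T" using assms(1,3) by auto
    show "T \<subseteq> prefix_classes ` S"
    proof
      fix Xs assume "Xs \<in> T"
      then have "Xs \<in> prefix_classes ` CS"
        using assms(2) prefix_classes_bij by (auto simp: bij_betw_def)
      then obtain xs where "xs \<in> CS" "Xs = prefix_classes xs" by blast
      then show "Xs \<in> prefix_classes ` S" using assms(3) \<open>Xs \<in> T\<close> by blast
    qed
  qed
  then have bij: "bij_betw prefix_classes S T"
    using bij_betw_subset[OF prefix_classes_bij assms(1)] by blast
  let ?f = "inv_into S prefix_classes"
  have "word lam (?f Xs) = word (Q_label lam) Xs" if "Xs \<in> T" for Xs
  proof -
    have "?f Xs \<in> S" "prefix_classes (?f Xs) = Xs"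
      using that image inv_into_into[of Xs prefix_classes S] f_inv_into_f[of Xs prefix_classes S]
      by auto
    then show ?thesis using word_prefix_classes assms(1) by (metis subsetD)
  qed
  then show ?thesis using bij_betw_inv_into[OF bij] by blast
qed

end

theorem proposition3p26:
  fixes A :: "'a set" and le :: "'a \<Rightarrow> 'a \<Rightarrow> bool" and z :: 'a
    and lam :: "'a \<Rightarrow> 'a \<Rightarrow> 'l::order"
  assumes "finite A" and "is_poset A le" and "is_bottom A le z" and "graded A le"
    and "gen_EW A le z lam"
  shows "(\<forall>k. \<exists>f. bij_betw f
              (sat_chains_from (Q_carrier A le z lam) (Q_le A le z lam) (Q_bottom A le z lam) k)
              (sat_chains_from A le z k) \<and>
            (\<forall>Xs \<in> sat_chains_from (Q_carrier A le z lam) (Q_le A le z lam) (Q_bottom A le z lam) k.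
               word lam (f Xs) = word (Q_label lam) Xs))
       \<and> (\<exists>g. bij_betw g
              {Xs. maximal_chain (Q_carrier A le z lam) (Q_le A le z lam) Xs}
              {xs. maximal_chain A le xs} \<and>
            (\<forall>Xs. maximal_chain (Q_carrier A le z lam) (Q_le A le z lam) Xs \<longrightarrow>
               word lam (g Xs) = word (Q_label lam) Xs))"
proof -
  interpret rank_two_switching_poset A le z lam
    using assms(2,3,5) by unfold_locales (simp_all add: gen_EW_def)
  have Q_sat_chains: "sat_chains_from QC QL (Q_bottom A le z lam) k =
      {Xs. sat_chain QC QL Xs \<and> hd Xs = Q_bottom A le z lam \<and> length Xs = Suc k}" for k
    by (auto simp: sat_chains_from_def)
  have Q_maximal_chains: "{Xs. maximal_chain QC QL Xs} =
      {Xs. sat_chain QC QL Xs \<and> hd Xs = Q_bottom A le z lam \<and> is_maximal QC QL (last Xs)}"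
    using maximal_chain_iff_sat_chain[OF Q_poset Q_is_bottom] by auto
  have "\<exists>f. bij_betw f (sat_chains_from QC QL (Q_bottom A le z lam) k) (sat_chains_from A le z k) \<and>
      (\<forall>Xs\<in>sat_chains_from QC QL (Q_bottom A le z lam) k.
        word lam (f Xs) = word (Q_label lam) Xs)" for k
    unfolding Q_sat_chains sat_chains_from_eq
    by (rule labelled_bij_from_prefix_classess) (auto simp: prefix_classes_sat_chain)
  moreover have "\<exists>g. bij_betw g {Xs. maximal_chain QC QL Xs} {xs. maximal_chain A le xs} \<and>
      (\<forall>Xs\<in>{Xs. maximal_chain QC QL Xs}. word lam (g Xs) = word (Q_label lam) Xs)"
    unfolding Q_maximal_chains maximal_chains_eq
    by (rule labelled_bij_from_prefix_classess)
      (auto simp: prefix_classes_sat_chain is_maximal_prefix_classes_iff[OF assms(1)])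
  ultimately show ?thesis by auto
qed

end
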